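(* Let $k=\mathbb{F}_3$, let $O_7(k)$ be the group of $7\times7$ matrices over $k$ orthogonal for the bilinear form $\langle x,y\rangle=x_1y_7+x_2y_6+\dots+x_7y_1$ on $k^7$, and let \[ A=\begin{pmatrix} 0&0&1&0&0&1&0\\ 1&0&0&0&0&0&1\\ 0&1&0&0&0&0&0\\ 0&0&0&0&0&0&0\\ 0&1&0&0&0&0&1\\ 0&0&1&0&1&0&0\\ 0&0&0&0&0&1&0 \end{pmatrix}. \] Then there exists $g\in O_7(k)$ such that $M=g^{-1}Ag$ satisfies $M_{ij}=0$ for all $(i,j)\in\{(4,1),(5,1),(5,2),(6,1),(6,2),(6,3),(7,1),(7,2),(7,3),(7,4)\}$. Even more, there exists $g\in O_7(k)$ such that $M=g^{-1}Ag$ satisfies these vanishing conditions and in addition $M_{31},M_{42},M_{53},M_{64},M_{75}\in k^\times$ (all remaining entries arbitrary).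
   Context: $M_{ij}$ denotes the entry in row $i$ and column $j$. *)

theory Defs
  imports "HOL-Analysis.Analysis" "HOL-Library.Numeral_Type"
begin

text \<open>The field k = F_3 is the type 3 of HOL-Library.Numeral_Type (the integers modulo 3,
  a commutative ring which is the field with 3 elements).  Vectors in k^7 and 7x7 matrices are
  indexed by the type 7, whose elements are 0,...,6; the paper's index i (1..7) is idx i.\<close>

definition idx :: "nat \<Rightarrow> 7" where
  "idx i = of_nat (i - 1)"

definition Jform :: "3 ^ 7 ^ 7" where
  "Jform = (\<chi> i j. if (i, j) \<in> {(idx a, idx (8 - a)) | a. a \<in> {1..7}} then 1 else 0)"

definition O7 :: "(3 ^ 7 ^ 7) set" where
  "O7 = {g. transpose g ** Jform ** g = Jform}"

definition Amat :: "3 ^ 7 ^ 7" where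
  "Amat = (\<chi> i j. if (i, j) \<in> (\<lambda>(a, b). (idx a, idx b)) `
        {(1,3),(1,6),(2,1),(2,7),(3,2),(5,2),(5,7),(6,3),(6,5),(7,6)} then 1 else 0)"

definition zero_pos :: "(nat \<times> nat) set" where
  "zero_pos = {(4,1),(5,1),(5,2),(6,1),(6,2),(6,3),(7,1),(7,2),(7,3),(7,4)}"

definition unit_pos :: "(nat \<times> nat) set" where
  "unit_pos = {(3,1),(4,2),(5,3),(6,4),(7,5)}"

end

theory Submission
  imports Defs
begin

text \<open>Since J is symmetric with J^2 = 1, the
  orthogonality relations g^T J g = J and g J g^T = J say that J g^T J is a two-sided
  inverse of g, so M = J g^T J A g is a product of explicit matrices over F_3 (multiplying by J
  merely reverses the order of rows or columns), and its entries are checked by computation.\<close>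

lemma UNIV_7: "(UNIV :: 7 set) = {0, 1, 2, 3, 4, 5, 6}"
proof -
  have "(x :: 7) \<in> {0, 1, 2, 3, 4, 5, 6}" for x
  proof (induct x)
    case (of_int z)
    then have "z = 0 \<or> z = 1 \<or> z = 2 \<or> z = 3 \<or> z = 4 \<or> z = 5 \<or> z = 6" by fastforce
    then show ?case by auto
  qed
  then show ?thesis by auto
qed

lemma sum_UNIV_7: "sum f (UNIV :: 7 set) = f 0 + f 1 + f 2 + f 3 + f 4 + f 5 + f 6"
  unfolding UNIV_7 by (simp add: add.assoc)

lemma all_7: "(\<forall>i :: 7. P i) \<longleftrightarrow> P 0 \<and> P 1 \<and> P 2 \<and> P 3 \<and> P 4 \<and> P 5 \<and> P 6"
proof -
  have "i \<in> {0, 1, 2, 3, 4, 5, 6}" for i :: 7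
    unfolding UNIV_7[symmetric] by (rule UNIV_I)
  then show ?thesis
    by (metis empty_iff insert_iff)
qed

lemma Jform_eq: "Jform = (\<chi> i j. if i + j = 6 then 1 else 0)"
proof -
  have "{1..7 :: nat} = {1, 2, 3, 4, 5, 6, 7}" by auto
  then have "{(idx a, idx (8 - a)) | a. a \<in> {1..7}}
      = (\<lambda>a. (idx a, idx (8 - a))) ` {1, 2, 3, 4, 5, 6, 7}"
    by blast
  also have "\<dots> = {(0, 6), (1, 5), (2, 4), (3, 3), (4, 2), (5, 1), (6, 0)}"
    by (simp add: idx_def)
  finally show ?thesis
    unfolding Jform_def vec_eq_iff all_7 by simp
qed

lemma Jform_mult: "Jform ** B = (\<chi> i j. B $ (6 - i) $ j)"
proof -
  have "(i + k = 6) = (k = 6 - i)" for i k :: 7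
    by (auto simp: algebra_simps)
  then show ?thesis
    by (simp add: Jform_eq matrix_matrix_mult_def vec_eq_iff if_distrib[where f = "\<lambda>x. x * _"]
        cong: if_cong)
qed

lemma mult_Jform: "B ** Jform = (\<chi> i j. B $ i $ (6 - j))"
proof -
  have "(k + j = 6) = (k = 6 - j)" for j k :: 7
    by (auto simp: algebra_simps)
  then show ?thesis
    by (simp add: Jform_eq matrix_matrix_mult_def vec_eq_iff if_distrib cong: if_cong)
qed

lemma Jform_mult_Jform: "Jform ** Jform = mat 1"
  unfolding Jform_mult by (simp add: Jform_eq mat_def vec_eq_iff)

lemma matrix_inv_eqI:
  fixes A B :: "'a::semiring_1 ^ 'n ^ 'n"
  assumes "A ** B = mat 1" and "B ** A = mat 1"
  shows "matrix_inv A = B"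
proof -
  let ?A' = "matrix_inv A"
  have "A ** ?A' = mat 1 \<and> ?A' ** A = mat 1"
    unfolding matrix_inv_def by (rule someI[where x = B]) (simp add: assms)
  then have left_inverse: "?A' ** A = mat 1" ..
  have "?A' = ?A' ** (A ** B)"
    using assms by (simp add: matrix_mul_rid)
  also have "\<dots> = B"
    by (simp add: matrix_mul_assoc left_inverse)
  finally show ?thesis .
qed

lemma matrix_inv_O7:
  assumes "g \<in> O7" and "transpose g \<in> O7"
  shows "matrix_inv g = Jform ** transpose g ** Jform"
proof (rule matrix_inv_eqI)
  have "g ** Jform ** transpose g = Jform"
    using assms(2) by (simp add: O7_def)
  then have "g ** (Jform ** transpose g ** Jform) = Jform ** Jform"
    by (simp add: matrix_mul_assoc)
  then show "g ** (Jform ** transpose g ** Jform) = mat 1"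
    by (simp add: Jform_mult_Jform)
  have "transpose g ** Jform ** g = Jform"
    using assms(1) by (simp add: O7_def)
  then have "Jform ** transpose g ** Jform ** g = Jform ** Jform"
    by (simp add: matrix_mul_assoc[symmetric])
  then show "Jform ** transpose g ** Jform ** g = mat 1"
    by (simp add: Jform_mult_Jform)
qed

text \<open>Row and column k of the list (counting from 0) become the element k of the index type,
  which is the paper's index k + 1.\<close>

definition matrix_of_rows :: "int list list \<Rightarrow> 'a::ring_1 ^ 'n::finite bit1 ^ 'm::finite bit1" where
  "matrix_of_rows xss = (\<chi> i j. of_int (xss ! nat (Rep_bit1 i) ! nat (Rep_bit1 j)))"

lemma matrix_of_rows_nth [simp]:
  "matrix_of_rows xss $ i $ j = of_int (xss ! nat (Rep_bit1 i) ! nat (Rep_bit1 j))"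
  by (simp add: matrix_of_rows_def)

declare bit1.Rep_0 [simp] bit1.Rep_1 [simp] bit1.Rep_numeral [simp]

lemma Amat_eq: "Amat = matrix_of_rows
   [[0, 0, 1, 0, 0, 1, 0],
    [1, 0, 0, 0, 0, 0, 1],
    [0, 1, 0, 0, 0, 0, 0],
    [0, 0, 0, 0, 0, 0, 0],
    [0, 1, 0, 0, 0, 0, 1],
    [0, 0, 1, 0, 1, 0, 0],
    [0, 0, 0, 0, 0, 1, 0]]"
proof -
  have "(\<lambda>(a, b). (idx a, idx b)) ` {(1,3),(1,6),(2,1),(2,7),(3,2),(5,2),(5,7),(6,3),(6,5),(7,6)}
     = {(0,2),(0,5),(1,0),(1,6),(2,1),(4,1),(4,6),(5,2),(5,4),(6,5)}"
    by (simp add: idx_def)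
  then show ?thesis
    unfolding Amat_def vec_eq_iff all_7 by simp
qed

definition conjugator :: "3 ^ 7 ^ 7" where
  "conjugator = matrix_of_rows
   [[ 1, 0, 1, 0, -1, -1, 1],
    [ 0, 1, -1, 1, 0, 1, 0],
    [-1, 0, 0, 1, -1, 1, -1],
    [-1, 0, 0, 0, 0, 0, 1],
    [ 0, 0, 1, -1, 1, -1, 0],
    [-1, 0, -1, 0, 1, -1, -1],
    [ 1, 1, -1, 0, -1, 1, 1]]"

lemma conjugator_O7: "conjugator \<in> O7"
  unfolding O7_def mem_Collect_eq mult_Jform vec_eq_iff all_7
  by (simp add: conjugator_def Jform_eq transpose_def matrix_matrix_mult_def sum_UNIV_7)

lemma transpose_conjugator_O7: "transpose conjugator \<in> O7"
  unfolding O7_def mem_Collect_eq mult_Jform vec_eq_iff all_7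
  by (simp add: conjugator_def Jform_eq transpose_def matrix_matrix_mult_def sum_UNIV_7)

lemma conjugate_Amat: "matrix_inv conjugator ** Amat ** conjugator = matrix_of_rows
   [[0, 0, 0, 0, 1, 0, 0],
    [0, 0, 0, 1, 0, -1, 0],
    [1, 0, 0, -1, 1, 0, 1],
    [0, 1, 0, 0, -1, 1, 0],
    [0, 0, 1, 0, 0, 0, 0],
    [0, 0, 0, 1, 0, 0, 0],
    [0, 0, 0, 0, 1, 0, 0]]"
  unfolding matrix_inv_O7[OF conjugator_O7 transpose_conjugator_O7] Jform_mult mult_Jform Amat_eq
    vec_eq_iff all_7
  by (simp add: conjugator_def transpose_def matrix_matrix_mult_def sum_UNIV_7)

theorem lemma2p4:
  shows "(\<exists>g \<in> O7. let M = matrix_inv g ** Amat ** g in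
            (\<forall>(i, j) \<in> zero_pos. M $ idx i $ idx j = 0))
       \<and> (\<exists>g \<in> O7. let M = matrix_inv g ** Amat ** g in
            (\<forall>(i, j) \<in> zero_pos. M $ idx i $ idx j = 0) \<and>
            (\<forall>(i, j) \<in> unit_pos. M $ idx i $ idx j \<noteq> 0))"
proof -
  let ?M = "matrix_inv conjugator ** Amat ** conjugator"
  have zeros: "\<forall>(i, j) \<in> zero_pos. ?M $ idx i $ idx j = 0"
    unfolding conjugate_Amat by (simp add: zero_pos_def idx_def)
  have units: "\<forall>(i, j) \<in> unit_pos. ?M $ idx i $ idx j \<noteq> 0"
    unfolding conjugate_Amat by (simp add: unit_pos_def idx_def)
  show ?thesis
    using conjugator_O7 zeros units unfolding Let_def by blast
qed

end
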